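(* Let $A\in\mathbb{C}^{n\times n}$ of rank $r>0$ and index $k$ be written in the Hartwig–Spindelböck decomposition $A=U\begin{bmatrix}\Sigma K&\Sigma L\\0&0\end{bmatrix}U^*$ (as in the context). Then: (a) if $m=1$, then $A^{\#_m}=A^{\mathrm{WC}}=U\begin{bmatrix}(\Sigma K)^{\mathrm{WG}}&0\\0&0\end{bmatrix}U^*$; (b) if $m\ge k$ (with $m\in\mathbb{N}=\{1,2,\dots\}$), then $A^{\#_m}=A^{\mathrm{cEP}}=U\begin{bmatrix}(\Sigma K)^{\mathrm{cEP}}&0\\0&0\end{bmatrix}U^*$.
   Context: Hartwig–Spindelböck decomposition: any $A\in\mathbb{C}^{n\times n}$ of rank $r>0$ can be written as $A=U\begin{bmatrix}\Sigma K&\Sigma L\\0&0\end{bmatrix}U^*$ with $U$ unitary, $\Sigma=\mathrm{diag}(\sigma_1I_{r_1},\dots,\sigma_sI_{r_s})$, $\sigma_1>\dots>\sigma_s>0$ the singular values of $A$, $r_1+\dots+r_s=r$, and $K\in\mathbb{C}^{r\times r}$, $L\in\mathbb{C}^{r\times(n-r)}$ with $KK^*+LL^*=I_r$. For a square matrix $B$: $B^\dagger$ Moore–Penrose inverse, $P_B=BB^\dagger$, $B^0=I$, $\mathcal{R}(\cdot)$ column space; $\mathrm{Ind}(B)$ is the smallest nonnegative integer $k$ with $\mathcal{R}(B^k)=\mathcal{R}(B^{k+1})$. The core-EP inverse $B^{\mathrm{cEP}}$ is the unique $X$ with $XBX=X$ and $\mathcal{R}(X)=\mathcal{R}(X^*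 )=\mathcal{R}(B^k)$, $k=\mathrm{Ind}(B)$. The WG inverse is $B^{\mathrm{WG}}:=(B^{\mathrm{cEP}})^2B$ and the WC inverse is $B^{\mathrm{WC}}:=B^{\mathrm{WG}}P_B$. For $m\in\mathbb{N}$, the $m$-weak group inverse is $B^{\mathrm{WG}_m}:=(B^{\mathrm{cEP}})^{m+1}B^m$ and the $m$-weak core inverse is $B^{\#_m}:=B^{\mathrm{WG}_m}P_{B^m}$. *)

theory Defs
  imports "Jordan_Normal_Form.Schur_Decomposition" "Jordan_Normal_Form.DL_Rank"
begin

definition col_sp :: "'a::semiring_0 mat \<Rightarrow> 'a vec set" where
  "col_sp B = {B *\<^sub>v x | x. x \<in> carrier_vec (dim_col B)}"

definition MP_inv :: "complex mat \<Rightarrow> complex mat" where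
  "MP_inv B = (THE X. X \<in> carrier_mat (dim_col B) (dim_row B) \<and>
      B * X * B = B \<and> X * B * X = X \<and>
      mat_adjoint (B * X) = B * X \<and> mat_adjoint (X * B) = X * B)"

definition proj_mat :: "complex mat \<Rightarrow> complex mat" where
  "proj_mat B = B * MP_inv B"

definition mat_index :: "complex mat \<Rightarrow> nat" where
  "mat_index B = (LEAST k. col_sp (B ^\<^sub>m k) = col_sp (B ^\<^sub>m (k + 1)))"

definition core_EP :: "complex mat \<Rightarrow> complex mat" where
  "core_EP B = (THE X. X \<in> carrier_mat (dim_row B) (dim_row B) \<and> X * B * X = X \<and>
      col_sp X = col_sp (B ^\<^sub>m mat_index B) \<and>
      col_sp (mat_adjoint X) = col_sp (B ^\<^sub>m mat_index B))"

definition WG_inv :: "complex mat \<Rightarrow> complex mat" where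
  "WG_inv B = (core_EP B) ^\<^sub>m 2 * B"

definition WC_inv :: "complex mat \<Rightarrow> complex mat" where
  "WC_inv B = WG_inv B * proj_mat B"

definition m_WG_inv :: "nat \<Rightarrow> complex mat \<Rightarrow> complex mat" where
  "m_WG_inv m B = (core_EP B) ^\<^sub>m (m + 1) * B ^\<^sub>m m"

definition m_weak_core_inv :: "nat \<Rightarrow> complex mat \<Rightarrow> complex mat" where
  "m_weak_core_inv m B = m_WG_inv m B * proj_mat (B ^\<^sub>m m)"

end

theory Submission
  imports Defs "Jordan_Normal_Form.Jordan_Normal_Form_Existence"
begin

text \<open>
  Conjugation \<open>X \<mapsto> U X U\<^sup>H\<close> by a unitary \<open>U\<close> is a \<open>*\<close>-automorphism preserving equality of
  column spaces, so the Moore--Penrose, core-EP, WG and WC inverses commute with it, and it suffices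
  to treat \<open>B = [T G; 0 0]\<close> with \<open>T = S K\<close>, \<open>G = S L\<close>. Since \<open>S\<close> is invertible and \<open>[K L]\<close> has
  orthonormal rows, \<open>B Q = [I 0; 0 0]\<close> for some \<open>Q\<close>. Hence \<open>B^(j+1) = [T^j 0; 0 0] B\<close> has the
  column space of \<open>[T^j 0; 0 0]\<close>, so the core-EP inverse of \<open>B\<close> is \<open>[cEP(T) 0; 0 0]\<close>; and
  \<open>B B^\<dagger> = [I 0; 0 0]\<close>, so the WC inverse of \<open>B\<close> is \<open>[WG(T) 0; 0 0]\<close>.

  For any square \<open>A\<close> of index \<open>k \<le> m\<close>, \<open>X = cEP(A)\<close> satisfies \<open>X^m A^(2m) = A^m\<close>, and
  \<open>X (A^m) (A^m)^\<dagger> = X\<close> since \<open>R(X\<^sup>H) = R(A^k) = R(A^m)\<close>; hence the \<open>m\<close>-weak core inverse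
  \<open>X^(m+1) A^(2m) (A^m)^\<dagger>\<close> is \<open>X\<close>.
  The inverses are defined by definite descriptions; their existence rests on the stabilization
  \<open>A^N = A^(N+1) Y\<close> of powers, which is read off from the Jordan normal form.
\<close>

section \<open>Conjugate transpose and powers\<close>

notation mat_adjoint ("_\<^sup>H" [1000] 999)

lemma mat_adjoint_dim[simp]: "dim_row (A\<^sup>H) = dim_col A" "dim_col (A\<^sup>H) = dim_row A"
  unfolding mat_adjoint_def by auto

lemma mat_adjoint_index[simp]:
  "i < dim_col A \<Longrightarrow> j < dim_row A \<Longrightarrow> (A :: complex mat)\<^sup>H $$ (i, j) = cnj (A $$ (j, i))"
  unfolding mat_adjoint_def by (simp add: mat_of_rows_index)

lemma mat_adjoint_carrier[simp]: "A \<in> carrier_mat m n \<Longrightarrow> A\<^sup>H \<in> carrier_mat n m"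
  unfolding carrier_mat_def by auto

lemma mat_adjoint_adjoint[simp]: "((A :: complex mat)\<^sup>H)\<^sup>H = A"
  by (rule eq_matI) auto

lemma mat_adjoint_one[simp]: "(1\<^sub>m n :: complex mat)\<^sup>H = 1\<^sub>m n"
  by (rule eq_matI) auto

lemma mat_adjoint_zero[simp]: "(0\<^sub>m m n :: complex mat)\<^sup>H = 0\<^sub>m n m"
  by (rule eq_matI) auto

lemma mat_adjoint_mult:
  assumes "(A :: complex mat) \<in> carrier_mat m n" "B \<in> carrier_mat n p"
  shows "(A * B)\<^sup>H = B\<^sup>H * A\<^sup>H"
proof (rule eq_matI)
  fix i j assume "i < dim_row (B\<^sup>H * A\<^sup>H)" "j < dim_col (B\<^sup>H * A\<^sup>H)"
  with assms show "(A * B)\<^sup>H $$ (i, j) = (B\<^sup>H * A\<^sup>H) $$ (i, j)"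
    by (simp add: scalar_prod_def mult.commute)
qed (use assms in auto)

lemma mat_adjoint_minus:
  "A \<in> carrier_mat m n \<Longrightarrow> B \<in> carrier_mat m n \<Longrightarrow> (A - B :: complex mat)\<^sup>H = A\<^sup>H - B\<^sup>H"
  by (rule eq_matI) auto

lemma mat_adjoint_four_block_mat:
  assumes "(A :: complex mat) \<in> carrier_mat m1 n1" "B \<in> carrier_mat m1 n2"
    "C \<in> carrier_mat m2 n1" "D \<in> carrier_mat m2 n2"
  shows "(four_block_mat A B C D)\<^sup>H = four_block_mat (A\<^sup>H) (C\<^sup>H) (B\<^sup>H) (D\<^sup>H)"
  by (rule eq_matI) (use assms in auto)

lemma mat_adjoint_mult_self_eq_zero:
  assumes A: "(A :: complex mat) \<in> carrier_mat m n" and "A\<^sup>H * A = 0\<^sub>m n n"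
  shows "A = 0\<^sub>m m n"
proof (rule eq_matI)
  fix i j assume i: "i < dim_row (0\<^sub>m m n)" and j: "j < dim_col (0\<^sub>m m n)"
  have col: "col A j \<in> carrier_vec m" using A by (auto intro!: carrier_vecI)
  have "col A j \<bullet>c col A j = cnj ((A\<^sup>H * A) $$ (j, j))"
    using A j by (simp add: scalar_prod_def mult.commute)
  also have "\<dots> = 0" using assms(2) j by simp
  finally have "col A j = 0\<^sub>v m" using conjugate_square_eq_0_vec[OF col] by blast
  then have "col A j $ i = 0" using i by simp
  then show "A $$ (i, j) = 0\<^sub>m m n $$ (i, j)" using A i j by simp
qed (use A in auto)

lemma pow_mat_Suc_left:
  assumes "A \<in> carrier_mat n n" shows "A ^\<^sub>m Suc k = A * A ^\<^sub>m k"
proof (induct k)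
  case (Suc k)
  have "A ^\<^sub>m Suc (Suc k) = (A * A ^\<^sub>m k) * A" using Suc by simp
  also have "\<dots> = A * (A ^\<^sub>m k * A)" using assms by (simp add: assoc_mult_mat[of _ n n _ n _ n])
  finally show ?case by simp
qed (use assms in simp)

lemma pow_mat_add:
  assumes "A \<in> carrier_mat n n" shows "A ^\<^sub>m (i + j) = A ^\<^sub>m i * A ^\<^sub>m j"
proof (induct j)
  case (Suc j)
  have "A ^\<^sub>m (i + Suc j) = (A ^\<^sub>m i * A ^\<^sub>m j) * A" using Suc by simp
  also have "\<dots> = A ^\<^sub>m i * (A ^\<^sub>m j * A)" using assms by (simp add: assoc_mult_mat[of _ n n _ n _ n])
  finally show ?case by simp
qed (use assms in simp)

lemma mat_adjoint_pow:
  assumes "(A :: complex mat) \<in> carrier_mat n n" shows "(A ^\<^sub>m k)\<^sup>H = A\<^sup>H ^\<^sub>m k"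
proof (induct k)
  case (Suc k)
  have "(A ^\<^sub>m Suc k)\<^sup>H = A\<^sup>H * (A ^\<^sub>m k)\<^sup>H"
    using assms by (simp add: mat_adjoint_mult[of _ n n _ n])
  then show ?case using Suc pow_mat_Suc_left[of "A\<^sup>H" n k] assms by simp
qed (use assms in simp)

lemma det_nonzero_right_inverse:
  assumes "A \<in> carrier_mat n n" and "det A \<noteq> (0 :: 'a :: field)"
  shows "\<exists>B \<in> carrier_mat n n. A * B = 1\<^sub>m n"
  using det_non_zero_imp_unit[OF assms, of undefined] unfolding Units_def ring_mat_def by auto

declare pow_mat.simps(2)[simp del]

section \<open>Stabilization of powers\<close>

definition powers_stabilize :: "nat \<Rightarrow> 'a :: semiring_1 mat \<Rightarrow> bool" where
  "powers_stabilize n A \<longleftrightarrow> (\<exists>N. \<exists>Y \<in> carrier_mat n n. A ^\<^sub>m N = A ^\<^sub>m Suc N * Y)"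

lemma pow_mat_stable_shift:
  assumes A: "A \<in> carrier_mat n n" and Y: "Y \<in> carrier_mat n n"
    and stable: "A ^\<^sub>m N = A ^\<^sub>m Suc N * Y" and "N \<le> j"
  shows "A ^\<^sub>m j = A ^\<^sub>m Suc j * Y"
proof -
  have "A ^\<^sub>m (N + d) = A ^\<^sub>m Suc (N + d) * Y" for d
  proof (induct d)
    case (Suc d)
    have "A ^\<^sub>m (N + Suc d) = A * (A ^\<^sub>m Suc (N + d) * Y)"
      using Suc pow_mat_Suc_left[OF A] by simp
    also have "\<dots> = (A * A ^\<^sub>m Suc (N + d)) * Y"
      using A Y by (simp add: assoc_mult_mat[of _ n n _ n _ n])
    also have "A * A ^\<^sub>m Suc (N + d) = A ^\<^sub>m Suc (N + Suc d)"
      using pow_mat_Suc_left[OF A, of "Suc (N + d)"] by simp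
    finally show ?case .
  qed (use stable in simp)
  from this[of "j - N"] show ?thesis using \<open>N \<le> j\<close> by simp
qed

lemma powers_stabilize_jordan_block: "powers_stabilize n (jordan_block n (a :: 'a :: field))"
proof (cases "a = 0")
  case True
  have "jordan_block n a ^\<^sub>m n = 0\<^sub>m n n"
    unfolding True jordan_block_zero_pow by (rule eq_matI) auto
  then have "jordan_block n a ^\<^sub>m n = jordan_block n a ^\<^sub>m Suc n * 0\<^sub>m n n" by simp
  then show ?thesis unfolding powers_stabilize_def using zero_carrier_mat by blast
next
  case False
  have "upper_triangular (jordan_block n a)"
    by (rule upper_triangularI) (auto simp: jordan_block_def)
  then have "det (jordan_block n a) = prod_list (diag_mat (jordan_block n a))"
    by (rule det_upper_triangular[OF _ jordan_block_carrier])
  also have "\<dots> = a ^ n"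
    using diag_jordan_block_pow[of n a 1] by (simp add: pow_mat.simps(2))
  finally have "det (jordan_block n a) = a ^ n" .
  with False have "det (jordan_block n a) \<noteq> 0" by simp
  then obtain B where "B \<in> carrier_mat n n" "jordan_block n a * B = 1\<^sub>m n"
    using det_nonzero_right_inverse[OF jordan_block_carrier] by blast
  then have "B \<in> carrier_mat n n" "jordan_block n a ^\<^sub>m 0 = jordan_block n a ^\<^sub>m Suc 0 * B"
    by (simp_all add: pow_mat.simps(2))
  then show ?thesis unfolding powers_stabilize_def by blast
qed

lemma four_block_diag_mult:
  assumes "A1 \<in> carrier_mat n1 n1" "A2 \<in> carrier_mat n1 n1"
    "B1 \<in> carrier_mat n2 n2" "B2 \<in> carrier_mat n2 n2"
  shows "four_block_mat A1 (0\<^sub>m n1 n2) (0\<^sub>m n2 n1) B1 * four_block_mat A2 (0\<^sub>m n1 n2) (0\<^sub>m n2 n1) B2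
    = four_block_mat (A1 * A2) (0\<^sub>m n1 n2) (0\<^sub>m n2 n1) (B1 * (B2 :: 'a :: semiring_0 mat))"
  by (subst mult_four_block_mat[OF assms(1) zero_carrier_mat zero_carrier_mat assms(3)
        assms(2) zero_carrier_mat zero_carrier_mat assms(4)]) (use assms in simp)

lemma powers_stabilize_four_block_diag:
  assumes A: "A \<in> carrier_mat n1 n1" and B: "B \<in> carrier_mat n2 n2"
    and "powers_stabilize n1 A" and "powers_stabilize n2 B"
  shows "powers_stabilize (n1 + n2) (four_block_mat A (0\<^sub>m n1 n2) (0\<^sub>m n2 n1) B)"
proof -
  obtain N1 Y1 where Y1: "Y1 \<in> carrier_mat n1 n1" "A ^\<^sub>m N1 = A ^\<^sub>m Suc N1 * Y1"
    using assms(3) unfolding powers_stabilize_def by auto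
  obtain N2 Y2 where Y2: "Y2 \<in> carrier_mat n2 n2" "B ^\<^sub>m N2 = B ^\<^sub>m Suc N2 * Y2"
    using assms(4) unfolding powers_stabilize_def by auto
  define N where "N = max N1 N2"
  have e1: "A ^\<^sub>m N = A ^\<^sub>m Suc N * Y1"
    by (rule pow_mat_stable_shift[OF A Y1]) (simp add: N_def)
  have e2: "B ^\<^sub>m N = B ^\<^sub>m Suc N * Y2"
    by (rule pow_mat_stable_shift[OF B Y2]) (simp add: N_def)
  let ?M = "four_block_mat A (0\<^sub>m n1 n2) (0\<^sub>m n2 n1) B"
  let ?Y = "four_block_mat Y1 (0\<^sub>m n1 n2) (0\<^sub>m n2 n1) Y2"
  have "?M ^\<^sub>m Suc N * ?Y =
      four_block_mat (A ^\<^sub>m Suc N * Y1) (0\<^sub>m n1 n2) (0\<^sub>m n2 n1) (B ^\<^sub>m Suc N * Y2)"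
    unfolding pow_four_block_mat[OF A B]
    by (rule four_block_diag_mult[OF pow_carrier_mat[OF A] Y1(1) pow_carrier_mat[OF B] Y2(1)])
  also have "\<dots> = ?M ^\<^sub>m N"
    unfolding e1[symmetric] e2[symmetric] pow_four_block_mat[OF A B] ..
  finally have "?M ^\<^sub>m N = ?M ^\<^sub>m Suc N * ?Y" ..
  moreover have "?Y \<in> carrier_mat (n1 + n2) (n1 + n2)" using Y1(1) Y2(1) by auto
  ultimately show ?thesis unfolding powers_stabilize_def by blast
qed

lemma powers_stabilize_jordan_matrix:
  "powers_stabilize (sum_list (map fst n_as)) (jordan_matrix (n_as :: (nat \<times> 'a :: field) list))"
proof (induct n_as)
  case Nil
  have "(jordan_matrix [] :: 'a mat) ^\<^sub>m 0 = jordan_matrix [] ^\<^sub>m Suc 0 * 1\<^sub>m 0"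
    by (rule eq_matI) auto
  then show ?case unfolding powers_stabilize_def by force
next
  case (Cons na n_as)
  obtain n a where na: "na = (n, a)" by force
  show ?case unfolding na jordan_matrix_Cons
    using powers_stabilize_four_block_diag[OF jordan_block_carrier jordan_matrix_carrier
        powers_stabilize_jordan_block Cons] by simp
qed

lemma powers_stabilize_similar:
  assumes "similar_mat_wit A J P Q" and "A \<in> carrier_mat n n" and "powers_stabilize n J"
  shows "powers_stabilize n A"
proof -
  from assms(1,2) have J: "J \<in> carrier_mat n n" and P: "P \<in> carrier_mat n n"
    and Q: "Q \<in> carrier_mat n n" and "Q * P = 1\<^sub>m n"
    unfolding similar_mat_wit_def Let_def by auto
  obtain N Y where Y: "Y \<in> carrier_mat n n" "J ^\<^sub>m N = J ^\<^sub>m Suc N * Y"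
    using assms(3) unfolding powers_stabilize_def by auto
  have pow: "A ^\<^sub>m k = P * J ^\<^sub>m k * Q" for k by (rule similar_mat_wit_pow_id[OF assms(1)])
  have JN: "J ^\<^sub>m Suc N \<in> carrier_mat n n" using J by simp
  have "A ^\<^sub>m N = P * (J ^\<^sub>m Suc N * Y) * Q" unfolding pow Y(2) ..
  also have "\<dots> = P * (J ^\<^sub>m Suc N * (Q * P) * Y) * Q"
    unfolding \<open>Q * P = 1\<^sub>m n\<close> right_mult_one_mat[OF JN] ..
  also have "\<dots> = (P * J ^\<^sub>m Suc N * Q) * (P * Y * Q)"
    using JN P Q Y(1) by (simp add: assoc_mult_mat[of _ n n _ n _ n] mult_carrier_mat[of _ n n _ n])
  also have "\<dots> = A ^\<^sub>m Suc N * (P * Y * Q)" unfolding pow ..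
  finally have "A ^\<^sub>m N = A ^\<^sub>m Suc N * (P * Y * Q)" .
  moreover have "P * Y * Q \<in> carrier_mat n n" using P Q Y(1) by (meson mult_carrier_mat)
  ultimately show ?thesis unfolding powers_stabilize_def by blast
qed

theorem powers_stabilize_complex_mat:
  assumes A: "(A :: complex mat) \<in> carrier_mat n n"
  shows "powers_stabilize n A"
proof -
  obtain as where "char_poly A = (\<Prod>a\<leftarrow>as. [:- a, 1:])"
    using char_poly_factorized[OF A] by auto
  then obtain n_as where "jordan_nf A n_as" using jordan_nf_exists[OF A] by blast
  then obtain P Q where sim: "similar_mat_wit A (jordan_matrix n_as) P Q"
    unfolding jordan_nf_def similar_mat_def by auto
  then have "jordan_matrix n_as \<in> carrier_mat n n"
    using A unfolding similar_mat_wit_def Let_def by auto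
  then have "sum_list (map fst n_as) = n" by (metis carrier_matD(1) jordan_matrix_dim(1))
  then show ?thesis
    using powers_stabilize_similar[OF sim A] powers_stabilize_jordan_matrix[of n_as] by simp
qed

section \<open>Column spaces\<close>

lemma col_sp_mult_subset:
  assumes B: "B \<in> carrier_mat n m" and Z: "Z \<in> carrier_mat m k"
  shows "col_sp (B * Z) \<subseteq> col_sp (B :: 'a :: comm_ring_1 mat)"
proof
  fix v assume "v \<in> col_sp (B * Z)"
  then obtain x where x: "x \<in> carrier_vec k" "v = (B * Z) *\<^sub>v x"
    unfolding col_sp_def using Z by auto
  then have "v = B *\<^sub>v (Z *\<^sub>v x)" using B Z by simp
  moreover have "Z *\<^sub>v x \<in> carrier_vec (dim_col B)" using mult_mat_vec_carrier[OF Z x(1)] B by simp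
  ultimately show "v \<in> col_sp B" unfolding col_sp_def by blast
qed

lemma mult_unit_vec_eq_col:
  assumes C: "C \<in> carrier_mat n k" and j: "j < k"
  shows "C *\<^sub>v unit_vec k j = col (C :: 'a :: comm_ring_1 mat) j"
proof (rule eq_vecI)
  fix i assume "i < dim_vec (col C j)"
  then have i: "i < n" using C by simp
  have "row C i \<bullet> unit_vec k j = row C i $ j"
    using C by (intro scalar_prod_right_unit) (use j in auto)
  then show "(C *\<^sub>v unit_vec k j) $ i = col C j $ i" using C i j by simp
qed (use C in simp)

lemma col_sp_subset_imp_factor:
  assumes C: "C \<in> carrier_mat n k" and B: "B \<in> carrier_mat n m"
    and sub: "col_sp C \<subseteq> col_sp B"
  shows "\<exists>Z \<in> carrier_mat m k. C = B * (Z :: 'a :: comm_ring_1 mat)"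
proof -
  have "\<exists>x. j < k \<longrightarrow> x \<in> carrier_vec m \<and> col C j = B *\<^sub>v x" for j
  proof (cases "j < k")
    case True
    have "col C j \<in> col_sp C" unfolding col_sp_def using C True mult_unit_vec_eq_col[OF C True]
      by (auto intro!: exI[of _ "unit_vec k j"])
    with sub show ?thesis unfolding col_sp_def using B by auto
  qed simp
  then obtain x where x: "\<forall>j. j < k \<longrightarrow> x j \<in> carrier_vec m \<and> col C j = B *\<^sub>v x j"
    using choice[of "\<lambda>j x. j < k \<longrightarrow> x \<in> carrier_vec m \<and> col C j = B *\<^sub>v x"] by blast
  define Z where "Z = mat m k (\<lambda>(i, j). x j $ i)"
  have Z: "Z \<in> carrier_mat m k" unfolding Z_def by simp
  have "C = B * Z"
  proof (rule mat_col_eqI)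
    fix j assume "j < dim_col (B * Z)"
    then have j: "j < k" using Z by simp
    have "col Z j = x j" unfolding Z_def using x j by (intro eq_vecI) auto
    then show "col C j = col (B * Z) j" using col_mult2[OF B Z j] x j by simp
  qed (use C B Z in auto)
  with Z show ?thesis by blast
qed

lemma col_sp_eq_iff:
  assumes C: "C \<in> carrier_mat n k" and B: "B \<in> carrier_mat n m"
  shows "col_sp C = col_sp (B :: 'a :: comm_ring_1 mat) \<longleftrightarrow>
    (\<exists>Z \<in> carrier_mat m k. C = B * Z) \<and> (\<exists>Z \<in> carrier_mat k m. B = C * Z)"
proof
  assume "col_sp C = col_sp B"
  then show "(\<exists>Z \<in> carrier_mat m k. C = B * Z) \<and> (\<exists>Z \<in> carrier_mat k m. B = C * Z)"
    using col_sp_subset_imp_factor[OF C B] col_sp_subset_imp_factor[OF B C] by auto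
next
  assume "(\<exists>Z \<in> carrier_mat m k. C = B * Z) \<and> (\<exists>Z \<in> carrier_mat k m. B = C * Z)"
  then obtain Z1 Z2 where "Z1 \<in> carrier_mat m k" "C = B * Z1" "Z2 \<in> carrier_mat k m" "B = C * Z2"
    by auto
  then show "col_sp C = col_sp B"
    using col_sp_mult_subset[OF B] col_sp_mult_subset[OF C] by (metis subset_antisym)
qed

lemma col_sp_eqI:
  assumes "C \<in> carrier_mat n k" "B \<in> carrier_mat n m"
    "Z1 \<in> carrier_mat m k" "C = B * Z1" "Z2 \<in> carrier_mat k m" "B = C * Z2"
  shows "col_sp C = col_sp (B :: 'a :: comm_ring_1 mat)"
  using col_sp_eq_iff[OF assms(1,2)] assms(3-6) by blast

section \<open>Generalized inverses of square matrices\<close>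

lemma m_weak_core_inv_one: "m_weak_core_inv 1 A = WC_inv A"
  unfolding m_weak_core_inv_def m_WG_inv_def WC_inv_def WG_inv_def
  by (simp add: pow_mat.simps(2) numeral_2_eq_2)

text \<open>Fixing the dimension lets carrier-conditional rules such as associativity act as simp rules.\<close>

locale square_matrices = fixes n :: nat
begin

lemma mult_carrier_square[simp]:
  "A \<in> carrier_mat n n \<Longrightarrow> B \<in> carrier_mat n n \<Longrightarrow> A * B \<in> carrier_mat n n"
  by (rule mult_carrier_mat)

lemma minus_carrier_square[simp]:
  "A \<in> carrier_mat n n \<Longrightarrow> B \<in> carrier_mat n n \<Longrightarrow> A - B \<in> carrier_mat n n"
  by (rule minus_carrier_mat)

lemma mult_assoc_square[simp]:
  "A \<in> carrier_mat n n \<Longrightarrow> B \<in> carrier_mat n n \<Longrightarrow> C \<in> carrier_mat n n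
  \<Longrightarrow> A * B * C = A * (B * (C :: complex mat))"
  by (rule assoc_mult_mat)

lemma mult_zero_square[simp]:
  "A \<in> carrier_mat n n \<Longrightarrow> A * 0\<^sub>m n n = 0\<^sub>m n n"
  "A \<in> carrier_mat n n \<Longrightarrow> 0\<^sub>m n n * A = 0\<^sub>m n n"
  by (auto intro: right_mult_zero_mat left_mult_zero_mat)

lemma mat_adjoint_mult_square[simp]:
  "A \<in> carrier_mat n n \<Longrightarrow> B \<in> carrier_mat n n \<Longrightarrow> (A * B :: complex mat)\<^sup>H = B\<^sup>H * A\<^sup>H"
  by (rule mat_adjoint_mult)

lemma mat_adjoint_minus_square[simp]:
  "A \<in> carrier_mat n n \<Longrightarrow> B \<in> carrier_mat n n \<Longrightarrow> (A - B :: complex mat)\<^sup>H = A\<^sup>H - B\<^sup>H"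
  by (rule mat_adjoint_minus)

lemma mult_minus_distrib_square:
  "A \<in> carrier_mat n n \<Longrightarrow> B \<in> carrier_mat n n \<Longrightarrow> C \<in> carrier_mat n n
  \<Longrightarrow> A * (B - C) = A * B - A * (C :: complex mat)"
  "A \<in> carrier_mat n n \<Longrightarrow> B \<in> carrier_mat n n \<Longrightarrow> C \<in> carrier_mat n n
  \<Longrightarrow> (B - C) * A = B * A - C * (A :: complex mat)"
  by (rule mult_minus_distrib_mat minus_mult_distrib_mat; assumption)+

lemma eq_if_minus_eq_zero:
  "A \<in> carrier_mat n n \<Longrightarrow> B \<in> carrier_mat n n \<Longrightarrow> A - B = 0\<^sub>m n n \<Longrightarrow> A = (B :: complex mat)"
  by (rule eq_matI) (auto, metis carrier_matD index_minus_mat(1) index_zero_mat(1) right_minus_eq)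

lemma col_sp_pow_mat_index:
  assumes A: "A \<in> carrier_mat n n"
  shows "col_sp (A ^\<^sub>m mat_index A) = col_sp (A ^\<^sub>m (mat_index A + 1))"
proof -
  obtain N Y where Y: "Y \<in> carrier_mat n n" "A ^\<^sub>m N = A ^\<^sub>m Suc N * Y"
    using powers_stabilize_complex_mat[OF A] unfolding powers_stabilize_def by auto
  have "col_sp (A ^\<^sub>m N) = col_sp (A ^\<^sub>m (N + 1))"
  proof (rule col_sp_eqI[OF _ _ Y(1)])
    show "A ^\<^sub>m N = A ^\<^sub>m (N + 1) * Y" using Y(2) by simp
    show "A ^\<^sub>m (N + 1) = A ^\<^sub>m N * A" by (simp add: pow_mat.simps(2))
  qed (use A in auto)
  then show ?thesis unfolding mat_index_def by (rule LeastI)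
qed

lemma pow_mat_index_factor_ge:
  assumes A: "A \<in> carrier_mat n n" and j: "mat_index A \<le> j"
  shows "\<exists>Z \<in> carrier_mat n n. A ^\<^sub>m mat_index A = A ^\<^sub>m j * Z"
proof -
  let ?k = "mat_index A"
  obtain Z0 where Z0: "Z0 \<in> carrier_mat n n" "A ^\<^sub>m ?k = A ^\<^sub>m Suc ?k * Z0"
    using col_sp_pow_mat_index[OF A] col_sp_eq_iff[of "A ^\<^sub>m ?k" n n "A ^\<^sub>m Suc ?k" n] A by auto
  have "\<exists>Z \<in> carrier_mat n n. A ^\<^sub>m ?k = A ^\<^sub>m (?k + d) * Z" for d
  proof (induct d)
    case 0
    show ?case using A by (intro bexI[of _ "1\<^sub>m n"]) auto
  next
    case (Suc d)
    then obtain Z where Z: "Z \<in> carrier_mat n n" "A ^\<^sub>m ?k = A ^\<^sub>m (?k + d) * Z" by auto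
    have "A ^\<^sub>m (?k + d) = A ^\<^sub>m Suc (?k + d) * Z0" by (rule pow_mat_stable_shift[OF A Z0]) simp
    then have "A ^\<^sub>m ?k = A ^\<^sub>m (?k + Suc d) * (Z0 * Z)" using Z Z0 A by simp
    then show ?case using Z Z0 by (intro bexI[of _ "Z0 * Z"]) auto
  qed
  from this[of "j - ?k"] show ?thesis using j by simp
qed

lemma col_sp_pow_mat_ge_index:
  assumes A: "A \<in> carrier_mat n n" and j: "mat_index A \<le> j"
  shows "col_sp (A ^\<^sub>m j) = col_sp (A ^\<^sub>m mat_index A)"
proof -
  obtain Z where "Z \<in> carrier_mat n n" "A ^\<^sub>m mat_index A = A ^\<^sub>m j * Z"
    using pow_mat_index_factor_ge[OF A j] by auto
  moreover have "A ^\<^sub>m j = A ^\<^sub>m mat_index A * A ^\<^sub>m (j - mat_index A)"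
    using pow_mat_add[OF A, of "mat_index A" "j - mat_index A"] j by simp
  ultimately show ?thesis using col_sp_eqI A by (metis pow_carrier_mat)
qed

lemma pow_mat_index_left_factor:
  assumes A: "A \<in> carrier_mat n n"
  shows "\<exists>W \<in> carrier_mat n n. A ^\<^sub>m mat_index A = W * A ^\<^sub>m Suc (mat_index A)"
proof -
  let ?k = "mat_index A"
  obtain N Y where Y: "Y \<in> carrier_mat n n" "A\<^sup>H ^\<^sub>m N = A\<^sup>H ^\<^sub>m Suc N * Y"
    using powers_stabilize_complex_mat[of "A\<^sup>H" n] A unfolding powers_stabilize_def by auto
  have "(A\<^sup>H ^\<^sub>m i)\<^sup>H = A ^\<^sub>m i" for i using mat_adjoint_pow[of "A\<^sup>H" n i] A by simp
  then have left: "A ^\<^sub>m N = Y\<^sup>H * A ^\<^sub>m Suc N"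
    using arg_cong[OF Y(2), of mat_adjoint] Y(1) A by simp
  define M where "M = N + ?k"
  have "A ^\<^sub>m M = Y\<^sup>H * A ^\<^sub>m Suc M"
  proof -
    have "A ^\<^sub>m M = A ^\<^sub>m N * A ^\<^sub>m ?k" unfolding M_def by (rule pow_mat_add[OF A])
    also have "\<dots> = Y\<^sup>H * (A ^\<^sub>m Suc N * A ^\<^sub>m ?k)" unfolding left using A Y by simp
    also have "A ^\<^sub>m Suc N * A ^\<^sub>m ?k = A ^\<^sub>m Suc M"
      unfolding M_def using pow_mat_add[OF A, of "Suc N" ?k] by simp
    finally show ?thesis .
  qed
  moreover obtain Z where Z: "Z \<in> carrier_mat n n" "A ^\<^sub>m ?k = A ^\<^sub>m M * Z"
    using pow_mat_index_factor_ge[OF A, of M] unfolding M_def by auto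
  moreover have "A ^\<^sub>m Suc ?k = A ^\<^sub>m Suc M * Z"
    unfolding pow_mat_Suc_left[OF A] Z(2) using A Z by simp
  ultimately have "A ^\<^sub>m ?k = Y\<^sup>H * A ^\<^sub>m Suc ?k" using A Y(1) by simp
  then show ?thesis using Y(1) by auto
qed

subsection \<open>Moore--Penrose inverse\<close>

lemma hermitian_pow_cancel:
  assumes H: "(H :: complex mat) \<in> carrier_mat n n" and herm: "H\<^sup>H = H" and E: "E \<in> carrier_mat n n"
    and zero: "H ^\<^sub>m Suc (Suc i) * E = 0\<^sub>m n n"
  shows "H ^\<^sub>m Suc i * E = 0\<^sub>m n n"
proof -
  have Hi: "H ^\<^sub>m j \<in> carrier_mat n n" for j using H by simp
  have herm_pow: "(H ^\<^sub>m j)\<^sup>H = H ^\<^sub>m j" for j using mat_adjoint_pow[OF H] herm by simp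
  define W where "W = H ^\<^sub>m Suc i * E"
  have W: "W \<in> carrier_mat n n" unfolding W_def using Hi E by simp
  have "W\<^sup>H * W = E\<^sup>H * (H ^\<^sub>m Suc i * H ^\<^sub>m Suc i) * E"
    unfolding W_def using Hi E herm_pow by simp
  also have "H ^\<^sub>m Suc i * H ^\<^sub>m Suc i = H ^\<^sub>m i * H ^\<^sub>m Suc (Suc i)"
    using pow_mat_add[OF H, of "Suc i" "Suc i"] pow_mat_add[OF H, of i "Suc (Suc i)"] by simp
  also have "E\<^sup>H * (H ^\<^sub>m i * H ^\<^sub>m Suc (Suc i)) * E = E\<^sup>H * H ^\<^sub>m i * (H ^\<^sub>m Suc (Suc i) * E)"
    using Hi E by simp
  also have "\<dots> = 0\<^sub>m n n" unfolding zero using Hi E by simp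
  finally show ?thesis using mat_adjoint_mult_self_eq_zero[OF W] unfolding W_def by simp
qed

lemma hermitian_pow_mult_eq_zero:
  assumes H: "(H :: complex mat) \<in> carrier_mat n n" and herm: "H\<^sup>H = H" and E: "E \<in> carrier_mat n n"
  shows "H ^\<^sub>m Suc i * E = 0\<^sub>m n n \<Longrightarrow> H * E = 0\<^sub>m n n"
proof (induct i)
  case 0
  then show ?case using H by (simp add: pow_mat.simps(2))
next
  case (Suc i)
  then show ?case using hermitian_pow_cancel[OF H herm E] by blast
qed

lemma hermitian_inner_inverse:
  assumes H: "(H :: complex mat) \<in> carrier_mat n n" and herm: "H\<^sup>H = H"
  shows "\<exists>G \<in> carrier_mat n n. H * G * H = H"
proof -
  obtain N Y where Y: "Y \<in> carrier_mat n n" and stable: "H ^\<^sub>m N = H ^\<^sub>m Suc N * Y"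
    using powers_stabilize_complex_mat[OF H] unfolding powers_stabilize_def by auto
  have Hi: "H ^\<^sub>m j \<in> carrier_mat n n" for j using H by simp
  define E where "E = 1\<^sub>m n - H * Y"
  have E: "E \<in> carrier_mat n n" unfolding E_def using H Y by simp
  have "H ^\<^sub>m N * E = H ^\<^sub>m N - H ^\<^sub>m N * H * Y"
    unfolding E_def using mult_minus_distrib_square(1)[of "H ^\<^sub>m N" "1\<^sub>m n" "H * Y"] H Y Hi by simp
  also have "H ^\<^sub>m N * H = H ^\<^sub>m Suc N" by (simp add: pow_mat.simps(2))
  also have "H ^\<^sub>m N - H ^\<^sub>m Suc N * Y = 0\<^sub>m n n" unfolding stable[symmetric] using Hi by simp
  finally have "H ^\<^sub>m Suc N * E = 0\<^sub>m n n"
    using pow_mat_Suc_left[OF H, of N] H Hi E by simp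
  then have HE: "H * E = 0\<^sub>m n n" by (rule hermitian_pow_mult_eq_zero[OF H herm E])
  have HHY: "H * (H * Y) = H"
  proof (rule eq_if_minus_eq_zero[symmetric])
    show "H - H * (H * Y) = 0\<^sub>m n n"
      using HE unfolding E_def using mult_minus_distrib_square(1)[of H "1\<^sub>m n" "H * Y"] H Y by simp
  qed (use H Y in auto)
  define W where "W = H * Y * H - H"
  have W: "W \<in> carrier_mat n n" unfolding W_def using H Y by simp
  have "H * (H * (Y * H)) = (H * (H * Y)) * H" using H Y by simp
  then have "H * (H * (Y * H)) = H * H" unfolding HHY .
  then have HW: "H * W = 0\<^sub>m n n"
    unfolding W_def using mult_minus_distrib_square(1)[of H "H * Y * H" H] H Y by simp
  have "W\<^sup>H * W = (H * Y\<^sup>H * H - H) * W" unfolding W_def using H Y herm by simp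
  also have "\<dots> = H * Y\<^sup>H * (H * W) - H * W"
    using mult_minus_distrib_square(2)[of W "H * Y\<^sup>H * H" H] H Y W by simp
  also have "\<dots> = 0\<^sub>m n n" unfolding HW using H Y by simp
  finally have "W = 0\<^sub>m n n" using mat_adjoint_mult_self_eq_zero[OF W] by simp
  then have "H * Y * H = H" using eq_if_minus_eq_zero[of "H * Y * H" H] H Y unfolding W_def by simp
  then show ?thesis using Y by blast
qed

lemma gram_inner_inverse:
  assumes C: "(C :: complex mat) \<in> carrier_mat n n" and G: "G \<in> carrier_mat n n"
    and inner: "(C\<^sup>H * C) * G * (C\<^sup>H * C) = C\<^sup>H * C"
  shows "C * (G * (C\<^sup>H * C)) = C" and "(C * (G * C\<^sup>H))\<^sup>H = C * (G * C\<^sup>H)"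
proof -
  have inner': "C\<^sup>H * (C * (G * (C\<^sup>H * C))) = C\<^sup>H * C" using inner C G by simp
  define V where "V = C * (G * (C\<^sup>H * C)) - C"
  have V: "V \<in> carrier_mat n n" unfolding V_def using C G by simp
  have CV: "C\<^sup>H * V = 0\<^sub>m n n" unfolding V_def
    using mult_minus_distrib_square(1)[of "C\<^sup>H" "C * (G * (C\<^sup>H * C))" C] C G inner' by simp
  have "V\<^sup>H * V = (C\<^sup>H * (C * (G\<^sup>H * C\<^sup>H)) - C\<^sup>H) * V" unfolding V_def using C G by simp
  also have "\<dots> = C\<^sup>H * (C * (G\<^sup>H * (C\<^sup>H * V))) - C\<^sup>H * V"
    using mult_minus_distrib_square(2)[of V "C\<^sup>H * (C * (G\<^sup>H * C\<^sup>H))" "C\<^sup>H"] C G V by simp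
  also have "\<dots> = 0\<^sub>m n n" unfolding CV using C G by simp
  finally have "V = 0\<^sub>m n n" using mat_adjoint_mult_self_eq_zero[OF V] by simp
  then show cancel: "C * (G * (C\<^sup>H * C)) = C"
    using eq_if_minus_eq_zero[of "C * (G * (C\<^sup>H * C))" C] C G unfolding V_def by simp
  have cancel': "C\<^sup>H * (C * (G\<^sup>H * C\<^sup>H)) = C\<^sup>H"
    using arg_cong[OF cancel, of mat_adjoint] C G by simp
  have "C * (G * C\<^sup>H) = C * (G * (C\<^sup>H * (C * (G\<^sup>H * C\<^sup>H))))" unfolding cancel' ..
  also have "\<dots> = (C * (G * (C\<^sup>H * C))) * (G\<^sup>H * C\<^sup>H)" using C G by simp
  also have "\<dots> = (C * (G * C\<^sup>H))\<^sup>H" unfolding cancel using C G by simp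
  finally show "(C * (G * C\<^sup>H))\<^sup>H = C * (G * C\<^sup>H)" by simp
qed

definition is_MP_inv :: "complex mat \<Rightarrow> complex mat \<Rightarrow> bool" where
  "is_MP_inv A X \<longleftrightarrow> X \<in> carrier_mat n n \<and> A * X * A = A \<and> X * A * X = X \<and>
    (A * X)\<^sup>H = A * X \<and> (X * A)\<^sup>H = X * A"

text \<open>Urquhart's formula \<open>A\<^sup>H (A A\<^sup>H)\<^sup>- A (A\<^sup>H A)\<^sup>- A\<^sup>H\<close> for arbitrary inner inverses.\<close>

lemma MP_inverse_exists:
  assumes A: "(A :: complex mat) \<in> carrier_mat n n"
  shows "\<exists>X. is_MP_inv A X"
proof -
  obtain G1 where G1: "G1 \<in> carrier_mat n n" "(A\<^sup>H * A) * G1 * (A\<^sup>H * A) = A\<^sup>H * A"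
    using hermitian_inner_inverse[of "A\<^sup>H * A"] A by auto
  obtain G2 where G2: "G2 \<in> carrier_mat n n" "(A * A\<^sup>H) * G2 * (A * A\<^sup>H) = A * A\<^sup>H"
    using hermitian_inner_inverse[of "A * A\<^sup>H"] A by auto
  have aA: "A\<^sup>H \<in> carrier_mat n n" using A by simp
  note gram1 = gram_inner_inverse[OF A G1]
  note gram2 = gram_inner_inverse[OF aA G2(1), unfolded mat_adjoint_adjoint, OF G2(2)]
  have "A * (A\<^sup>H * (G2\<^sup>H * A)) = A" using arg_cong[OF gram2(1), of mat_adjoint] A G2(1) by simp
  moreover have "A\<^sup>H * (G2\<^sup>H * A) = A\<^sup>H * (G2 * A)" using gram2(2) A G2(1) by simp
  ultimately have K: "A * (A\<^sup>H * (G2 * A)) = A" by simp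
  define X where "X = A\<^sup>H * (G2 * (A * (G1 * A\<^sup>H)))"
  have X: "X \<in> carrier_mat n n" unfolding X_def using A G1 G2 by simp
  have "A * X = (A * (A\<^sup>H * (G2 * A))) * (G1 * A\<^sup>H)" unfolding X_def using A G1 G2 by simp
  then have AX: "A * X = A * (G1 * A\<^sup>H)" unfolding K .
  have "X * A = A\<^sup>H * (G2 * (A * (G1 * (A\<^sup>H * A))))" unfolding X_def using A G1 G2 by simp
  then have XA: "X * A = A\<^sup>H * (G2 * A)" unfolding gram1(1) .
  have "A * X * A = A * (G1 * (A\<^sup>H * A))" unfolding AX using A G1 by simp
  then have AXA: "A * X * A = A" unfolding gram1(1) .
  have "X * A * X = A\<^sup>H * (G2 * A) * X" unfolding XA ..
  also have "\<dots> = A\<^sup>H * (G2 * ((A * (A\<^sup>H * (G2 * A))) * (G1 * A\<^sup>H)))"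
    unfolding X_def using A G1 G2 by simp
  finally have XAX: "X * A * X = X" unfolding K X_def .
  show ?thesis unfolding is_MP_inv_def using X AXA XAX AX XA gram1(2) gram2(2) by auto
qed

lemma MP_inverse_unique:
  assumes A: "(A :: complex mat) \<in> carrier_mat n n" and "is_MP_inv A X1" and "is_MP_inv A X2"
  shows "X1 = X2"
proof -
  from assms(2) have X1: "X1 \<in> carrier_mat n n" and p1: "A * X1 * A = A" "X1 * A * X1 = X1"
    "(A * X1)\<^sup>H = A * X1" "(X1 * A)\<^sup>H = X1 * A" unfolding is_MP_inv_def by auto
  from assms(3) have X2: "X2 \<in> carrier_mat n n" and p2: "A * X2 * A = A" "X2 * A * X2 = X2"
    "(A * X2)\<^sup>H = A * X2" "(X2 * A)\<^sup>H = X2 * A" unfolding is_MP_inv_def by auto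
  have "X1 = X1 * A * X2"
  proof -
    have "X1 = X1 * (A * X1)\<^sup>H" using p1 X1 A by simp
    also have "\<dots> = X1 * X1\<^sup>H * (A * X2 * A)\<^sup>H" using p2 X1 X2 A by simp
    also have "\<dots> = X1 * ((A * X1)\<^sup>H * (A * X2)\<^sup>H)" using X1 X2 A by simp
    also have "\<dots> = (X1 * A * X1) * A * X2" unfolding p1(3) p2(3) using X1 X2 A by simp
    finally show ?thesis unfolding p1(2) .
  qed
  moreover have "X2 = X1 * A * X2"
  proof -
    have "X2 = (X2 * A)\<^sup>H * X2" using p2 X2 A by simp
    also have "\<dots> = (A * X1 * A)\<^sup>H * X2\<^sup>H * X2" using p1 X1 X2 A by simp
    also have "\<dots> = ((X1 * A)\<^sup>H * (X2 * A)\<^sup>H) * X2" using X1 X2 A by simp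
    also have "\<dots> = X1 * A * (X2 * A * X2)" unfolding p1(4) p2(4) using X1 X2 A by simp
    finally show ?thesis unfolding p2(2) .
  qed
  ultimately show ?thesis by simp
qed

lemma is_MP_inv_MP_inv:
  assumes A: "(A :: complex mat) \<in> carrier_mat n n"
  shows "is_MP_inv A (MP_inv A)"
proof -
  obtain X where X: "is_MP_inv A X" using MP_inverse_exists[OF A] by auto
  have "is_MP_inv A Y \<longleftrightarrow> Y \<in> carrier_mat (dim_col A) (dim_row A) \<and> A * Y * A = A \<and>
      Y * A * Y = Y \<and> (A * Y)\<^sup>H = A * Y \<and> (Y * A)\<^sup>H = Y * A" for Y
    using A unfolding is_MP_inv_def by auto
  then show ?thesis
    using theI[of "is_MP_inv A", OF X MP_inverse_unique[OF A _ X]] unfolding MP_inv_def by simp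
qed

lemma MP_inv_carrier: "(A :: complex mat) \<in> carrier_mat n n \<Longrightarrow> MP_inv A \<in> carrier_mat n n"
  using is_MP_inv_MP_inv unfolding is_MP_inv_def by blast

lemma MP_inv_eqI: "A \<in> carrier_mat n n \<Longrightarrow> is_MP_inv A X \<Longrightarrow> MP_inv A = X"
  using MP_inverse_unique is_MP_inv_MP_inv by blast

lemma MP_inv_adjoint_eq:
  assumes C: "(C :: complex mat) \<in> carrier_mat n n"
  shows "(MP_inv C)\<^sup>H = C * (MP_inv C * (MP_inv C)\<^sup>H)"
proof -
  from is_MP_inv_MP_inv[OF C] have M: "MP_inv C \<in> carrier_mat n n"
    and "MP_inv C * C * MP_inv C = MP_inv C" "(C * MP_inv C)\<^sup>H = C * MP_inv C"
    unfolding is_MP_inv_def by auto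
  then have "MP_inv C = MP_inv C * (C * MP_inv C)\<^sup>H" using C by simp
  then have "(MP_inv C)\<^sup>H = (MP_inv C * (C * MP_inv C)\<^sup>H)\<^sup>H" by simp
  then show ?thesis using C M by simp
qed

lemma proj_mat_eqI:
  assumes A: "(A :: complex mat) \<in> carrier_mat n n" and P: "P \<in> carrier_mat n n"
    and Q: "Q \<in> carrier_mat n n"
    and herm: "P\<^sup>H = P" and PA: "P * A = A" and AQ: "A * Q = P"
  shows "proj_mat A = P"
proof -
  define M where "M = MP_inv A"
  from is_MP_inv_MP_inv[OF A] have M: "M \<in> carrier_mat n n"
    and MP: "A * M * A = A" "(A * M)\<^sup>H = A * M"
    unfolding is_MP_inv_def M_def by auto
  have "A * M * P = (A * M * A) * Q" unfolding AQ[symmetric] using A M Q by simp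
  then have AMP: "A * M * P = P" unfolding MP(1) AQ .
  have "A * M = (P * (A * M))\<^sup>H"
    using PA MP(2) A M P by (simp add: assoc_mult_mat[of P n n A n M n, symmetric])
  also have "\<dots> = A * M * P" using A M P herm MP(2) by simp
  finally show ?thesis unfolding proj_mat_def M_def[symmetric] AMP .
qed

lemma mult_proj_mat_eq:
  assumes X: "(X :: complex mat) \<in> carrier_mat n n" and B: "B \<in> carrier_mat n n"
    and sub: "col_sp (X\<^sup>H) \<subseteq> col_sp B"
  shows "X * proj_mat B = X"
proof -
  obtain Z where Z: "Z \<in> carrier_mat n n" "X\<^sup>H = B * Z"
    using col_sp_subset_imp_factor[OF _ B sub, of n] X by auto
  have "X = (X\<^sup>H)\<^sup>H" by simp
  also have "\<dots> = Z\<^sup>H * B\<^sup>H" unfolding Z(2) using Z B by simp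
  finally have XZ: "X = Z\<^sup>H * B\<^sup>H" .
  from is_MP_inv_MP_inv[OF B] have M: "MP_inv B \<in> carrier_mat n n"
    and MP: "B * MP_inv B * B = B" "(B * MP_inv B)\<^sup>H = B * MP_inv B"
    unfolding is_MP_inv_def by auto
  have "X * proj_mat B = Z\<^sup>H * (B * MP_inv B * B)\<^sup>H"
    unfolding proj_mat_def XZ using Z B M MP(2) by simp
  also have "\<dots> = X" unfolding MP(1) XZ ..
  finally show ?thesis .
qed

subsection \<open>Core-EP inverse\<close>

definition is_core_EP :: "complex mat \<Rightarrow> complex mat \<Rightarrow> bool" where
  "is_core_EP A X \<longleftrightarrow> X \<in> carrier_mat n n \<and> X * A * X = X \<and>
    col_sp X = col_sp (A ^\<^sub>m mat_index A) \<and> col_sp (X\<^sup>H) = col_sp (A ^\<^sub>m mat_index A)"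

lemma col_sp_mult_MP_inv:
  assumes B: "(B :: complex mat) \<in> carrier_mat n n" and C: "C \<in> carrier_mat n n"
    and W: "W \<in> carrier_mat n n" "B = W * C"
  shows "col_sp (B * MP_inv C) = col_sp B"
proof -
  from is_MP_inv_MP_inv[OF C] have M: "MP_inv C \<in> carrier_mat n n"
    and CMC: "C * MP_inv C * C = C" unfolding is_MP_inv_def by auto
  have "B * MP_inv C * C = W * (C * MP_inv C * C)" unfolding W(2) using W C M by simp
  then have "B = B * MP_inv C * C" unfolding CMC W(2)[symmetric] by simp
  then show ?thesis by (rule col_sp_eqI[OF _ B M refl C, rotated]) (use B M in simp)
qed

lemma col_sp_adjoint_mult_MP_inv:
  assumes A: "(A :: complex mat) \<in> carrier_mat n n" and B: "B \<in> carrier_mat n n"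
    and AB: "A * B = B * A" and Z: "Z \<in> carrier_mat n n" "B = B * A * Z"
  shows "col_sp ((B * MP_inv (B * A))\<^sup>H) = col_sp B"
proof -
  define C where "C = B * A"
  define M where "M = MP_inv C"
  have C: "C \<in> carrier_mat n n" unfolding C_def using A B by simp
  have AB': "A * B = C" unfolding C_def by (rule AB)
  have Z': "B = C * Z" unfolding C_def by (rule Z(2))
  from is_MP_inv_MP_inv[OF C] have M: "M \<in> carrier_mat n n"
    and MP: "C * M * C = C" "(C * M)\<^sup>H = C * M"
    unfolding is_MP_inv_def M_def by auto
  have "M\<^sup>H = C * (M * M\<^sup>H)" unfolding M_def by (rule MP_inv_adjoint_eq[OF C])
  then have MH: "M\<^sup>H = B * (A * (M * M\<^sup>H))" unfolding C_def using A B M by simp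
  have "(B * M)\<^sup>H = M\<^sup>H * B\<^sup>H" using B M by simp
  also have "\<dots> = B * (A * (M * M\<^sup>H)) * B\<^sup>H" by (rule arg_cong[OF MH, where f = "\<lambda>Y. Y * B\<^sup>H"])
  finally have adj: "(B * M)\<^sup>H = B * (A * (M * (M\<^sup>H * B\<^sup>H)))" using A B M by simp
  have "(B * M)\<^sup>H * (A\<^sup>H * B) = (A * (B * M))\<^sup>H * B" using A B M by simp
  also have "A * (B * M) = C * M" unfolding AB'[symmetric] using A B M by simp
  also have "(C * M)\<^sup>H * B = C * M * C * Z" unfolding MP(2) Z' using C M Z(1) by simp
  also have "\<dots> = B" unfolding MP(1) Z' ..
  finally have "B = (B * M)\<^sup>H * (A\<^sup>H * B)" by simp
  then show ?thesis unfolding C_def[symmetric] M_def[symmetric]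
    by (intro col_sp_eqI[of "(B * M)\<^sup>H" n n B n _ "A\<^sup>H * B", OF _ B _ adj])
      (use A B M in simp_all)
qed

lemma is_core_EP_formula:
  assumes A: "(A :: complex mat) \<in> carrier_mat n n"
  shows "is_core_EP A (A ^\<^sub>m mat_index A * MP_inv (A ^\<^sub>m Suc (mat_index A)))"
proof -
  let ?B = "A ^\<^sub>m mat_index A" and ?C = "A ^\<^sub>m Suc (mat_index A)"
  let ?M = "MP_inv ?C"
  have B: "?B \<in> carrier_mat n n" and C: "?C \<in> carrier_mat n n" using A by simp_all
  have M: "?M \<in> carrier_mat n n" by (rule MP_inv_carrier[OF C])
  have BA: "?B * A = ?C" by (simp add: pow_mat.simps(2))
  have AB: "A * ?B = ?C" by (rule pow_mat_Suc_left[OF A, symmetric])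
  obtain Z where Z: "Z \<in> carrier_mat n n" "?B = ?B * A * Z"
    using col_sp_pow_mat_index[OF A] col_sp_eq_iff[OF B C] unfolding BA by auto
  obtain W where W: "W \<in> carrier_mat n n" "?B = W * ?C"
    using pow_mat_index_left_factor[OF A] by auto
  have "?B * ?M * A * (?B * ?M) = ?B * (?M * (A * ?B) * ?M)" using A B M by simp
  also have "\<dots> = ?B * ?M"
    unfolding AB using is_MP_inv_MP_inv[OF C] unfolding is_MP_inv_def by simp
  finally show ?thesis unfolding is_core_EP_def
    using col_sp_mult_MP_inv[OF B C W] col_sp_adjoint_mult_MP_inv[OF A B _ Z] AB BA B M by simp
qed

lemma core_EP_inverse_unique:
  assumes A: "(A :: complex mat) \<in> carrier_mat n n" and "is_core_EP A X1" and "is_core_EP A X2"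
  shows "X1 = X2"
proof -
  from assms(2) have X1: "X1 \<in> carrier_mat n n" and p1: "X1 * A * X1 = X1"
    and col1: "col_sp X1 = col_sp (A ^\<^sub>m mat_index A)"
    and adj1: "col_sp (X1\<^sup>H) = col_sp (A ^\<^sub>m mat_index A)"
    unfolding is_core_EP_def by auto
  from assms(3) have X2: "X2 \<in> carrier_mat n n" and p2: "X2 * A * X2 = X2"
    and col2: "col_sp X2 = col_sp (A ^\<^sub>m mat_index A)"
    and adj2: "col_sp (X2\<^sup>H) = col_sp (A ^\<^sub>m mat_index A)"
    unfolding is_core_EP_def by auto
  obtain Z where Z: "Z \<in> carrier_mat n n" "X2 = X1 * Z"
    using col_sp_subset_imp_factor[OF X2 X1] col1 col2 by auto
  obtain Z' where Z': "Z' \<in> carrier_mat n n" "X1 = X2 * Z'"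
    using col_sp_subset_imp_factor[OF X1 X2] col1 col2 by auto
  obtain V where V: "V \<in> carrier_mat n n" "X2\<^sup>H = X1\<^sup>H * V"
    using col_sp_subset_imp_factor[of "X2\<^sup>H" n n "X1\<^sup>H" n] X1 X2 adj1 adj2 by auto
  have "X2 = (X2\<^sup>H)\<^sup>H" by simp
  also have "\<dots> = V\<^sup>H * X1" unfolding V(2) using V X1 by simp
  finally have X2V: "X2 = V\<^sup>H * X1" .
  have "X2 * A * X1 = X2 * A * X2 * Z'" unfolding Z'(2) using X2 A Z' by simp
  then have "X2 * A * X1 = X1" unfolding p2 Z'(2)[symmetric] .
  moreover have "X2 * A * X1 = V\<^sup>H * (X1 * A * X1)" unfolding X2V using V X1 A by simp
  then have "X2 * A * X1 = X2" unfolding p1 X2V[symmetric] .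
  ultimately show ?thesis by simp
qed

lemma is_core_EP_core_EP:
  assumes A: "(A :: complex mat) \<in> carrier_mat n n"
  shows "is_core_EP A (core_EP A)"
proof -
  note X = is_core_EP_formula[OF A]
  have "is_core_EP A Y \<longleftrightarrow> Y \<in> carrier_mat (dim_row A) (dim_row A) \<and> Y * A * Y = Y \<and>
      col_sp Y = col_sp (A ^\<^sub>m mat_index A) \<and> col_sp (Y\<^sup>H) = col_sp (A ^\<^sub>m mat_index A)" for Y
    using A unfolding is_core_EP_def by auto
  then show ?thesis
    using theI[of "is_core_EP A", OF X core_EP_inverse_unique[OF A _ X]]
    unfolding core_EP_def by simp
qed

lemma core_EP_carrier: "(A :: complex mat) \<in> carrier_mat n n \<Longrightarrow> core_EP A \<in> carrier_mat n n"
  using is_core_EP_core_EP unfolding is_core_EP_def by blast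

lemma WG_inv_carrier: "(A :: complex mat) \<in> carrier_mat n n \<Longrightarrow> WG_inv A \<in> carrier_mat n n"
  unfolding WG_inv_def using core_EP_carrier by simp

lemma core_EP_eqI:
  assumes A: "(A :: complex mat) \<in> carrier_mat n n" and X: "X \<in> carrier_mat n n"
    and "X * A * X = X" and j: "mat_index A \<le> j"
    and "col_sp X = col_sp (A ^\<^sub>m j)" and "col_sp (X\<^sup>H) = col_sp (A ^\<^sub>m j)"
  shows "core_EP A = X"
proof -
  have "is_core_EP A X"
    using assms col_sp_pow_mat_ge_index[OF A j] unfolding is_core_EP_def by simp
  then show ?thesis using core_EP_inverse_unique[OF A is_core_EP_core_EP[OF A]] by blast
qed

lemma core_EP_mult_pow_Suc:
  assumes A: "(A :: complex mat) \<in> carrier_mat n n" and j: "mat_index A \<le> j"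
  shows "core_EP A * A ^\<^sub>m Suc j = A ^\<^sub>m j"
proof -
  let ?k = "mat_index A" and ?X = "core_EP A"
  from is_core_EP_core_EP[OF A] have X: "?X \<in> carrier_mat n n" and XAX: "?X * A * ?X = ?X"
    and col: "col_sp ?X = col_sp (A ^\<^sub>m ?k)"
    unfolding is_core_EP_def by auto
  obtain W where W: "W \<in> carrier_mat n n" "A ^\<^sub>m ?k = ?X * W"
    using col_sp_subset_imp_factor[of "A ^\<^sub>m ?k" n n ?X n] A X col by auto
  have "?X * A ^\<^sub>m Suc ?k = ?X * A * ?X * W"
    unfolding pow_mat_Suc_left[OF A] W(2) using X A W by simp
  then have Xk: "?X * A ^\<^sub>m Suc ?k = A ^\<^sub>m ?k" unfolding XAX W(2)[symmetric] .
  have "A ^\<^sub>m Suc j = A ^\<^sub>m Suc ?k * A ^\<^sub>m (j - ?k)"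
    using pow_mat_add[OF A, of "Suc ?k" "j - ?k"] j by simp
  then have "?X * A ^\<^sub>m Suc j = (?X * A ^\<^sub>m Suc ?k) * A ^\<^sub>m (j - ?k)" using X A by simp
  also have "\<dots> = A ^\<^sub>m j" unfolding Xk using pow_mat_add[OF A, of ?k "j - ?k"] j by simp
  finally show ?thesis .
qed

lemma core_EP_pow_mult_pow:
  assumes A: "(A :: complex mat) \<in> carrier_mat n n" and j: "mat_index A \<le> j"
  shows "core_EP A ^\<^sub>m i * A ^\<^sub>m (j + i) = A ^\<^sub>m j"
proof (induct i)
  case (Suc i)
  have "core_EP A ^\<^sub>m Suc i * A ^\<^sub>m (j + Suc i) =
      core_EP A ^\<^sub>m i * (core_EP A * A ^\<^sub>m Suc (j + i))"
    using A core_EP_carrier[OF A] by (simp add: pow_mat.simps(2))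
  also have "core_EP A * A ^\<^sub>m Suc (j + i) = A ^\<^sub>m (j + i)"
    using core_EP_mult_pow_Suc[OF A] j by simp
  finally show ?case using Suc by simp
qed (use A core_EP_carrier[OF A] in simp)

theorem m_weak_core_inv_eq_core_EP:
  assumes A: "(A :: complex mat) \<in> carrier_mat n n" and m: "mat_index A \<le> m"
  shows "m_weak_core_inv m A = core_EP A"
proof -
  let ?X = "core_EP A"
  from is_core_EP_core_EP[OF A] have X: "?X \<in> carrier_mat n n"
    and adj: "col_sp (?X\<^sup>H) = col_sp (A ^\<^sub>m mat_index A)"
    unfolding is_core_EP_def by auto
  have Am: "A ^\<^sub>m m \<in> carrier_mat n n" "MP_inv (A ^\<^sub>m m) \<in> carrier_mat n n"
    using A MP_inv_carrier[of "A ^\<^sub>m m"] by auto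
  have "m_weak_core_inv m A = ?X * (?X ^\<^sub>m m * A ^\<^sub>m (m + m)) * MP_inv (A ^\<^sub>m m)"
    unfolding m_weak_core_inv_def m_WG_inv_def proj_mat_def pow_mat_add[OF A]
    using pow_mat_Suc_left[OF X, of m] X Am by simp
  also have "?X ^\<^sub>m m * A ^\<^sub>m (m + m) = A ^\<^sub>m m" by (rule core_EP_pow_mult_pow[OF A m])
  also have "?X * A ^\<^sub>m m * MP_inv (A ^\<^sub>m m) = ?X * proj_mat (A ^\<^sub>m m)"
    unfolding proj_mat_def using X Am by simp
  also have "\<dots> = ?X"
    using mult_proj_mat_eq[OF X Am(1)] adj col_sp_pow_mat_ge_index[OF A m] by simp
  finally show ?thesis .
qed

subsection \<open>Invariance under unitary similarity\<close>

definition unitary :: "complex mat \<Rightarrow> bool" where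
  "unitary U \<longleftrightarrow> U \<in> carrier_mat n n \<and> U * U\<^sup>H = 1\<^sub>m n \<and> U\<^sup>H * U = 1\<^sub>m n"

definition unitary_conj :: "complex mat \<Rightarrow> complex mat \<Rightarrow> complex mat" where
  "unitary_conj U X = U * X * U\<^sup>H"

lemma unitary_adjoint: "unitary U \<Longrightarrow> unitary (U\<^sup>H)"
  unfolding unitary_def by auto

lemma unitary_conj_carrier:
  "unitary U \<Longrightarrow> X \<in> carrier_mat n n \<Longrightarrow> unitary_conj U X \<in> carrier_mat n n"
  unfolding unitary_def unitary_conj_def by simp

lemma unitary_conj_mult:
  assumes U: "unitary U" and X: "X \<in> carrier_mat n n" and Y: "Y \<in> carrier_mat n n"
  shows "unitary_conj U X * unitary_conj U Y = unitary_conj U (X * Y)"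
proof -
  from U have U': "U \<in> carrier_mat n n" and UU: "U\<^sup>H * U = 1\<^sub>m n" unfolding unitary_def by auto
  have "unitary_conj U X * unitary_conj U Y = U * (X * ((U\<^sup>H * U) * (Y * U\<^sup>H)))"
    unfolding unitary_conj_def using U' X Y by simp
  also have "\<dots> = unitary_conj U (X * Y)"
    unfolding UU unitary_conj_def using U' X Y by simp
  finally show ?thesis .
qed

lemma unitary_conj_adjoint:
  "unitary U \<Longrightarrow> X \<in> carrier_mat n n \<Longrightarrow> (unitary_conj U X)\<^sup>H = unitary_conj U (X\<^sup>H)"
  unfolding unitary_def unitary_conj_def by simp

lemma unitary_conj_pow:
  assumes U: "unitary U" and X: "X \<in> carrier_mat n n"
  shows "unitary_conj U X ^\<^sub>m k = unitary_conj U (X ^\<^sub>m k)"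
proof (induct k)
  case 0
  from U have "U \<in> carrier_mat n n" "U * U\<^sup>H = 1\<^sub>m n" unfolding unitary_def by auto
  then show ?case unfolding unitary_conj_def using X left_mult_one_mat[of "U\<^sup>H" n n] by simp
next
  case (Suc k)
  then show ?case
    using unitary_conj_mult[OF U pow_carrier_mat[OF X] X] by (simp add: pow_mat.simps(2))
qed

lemma unitary_conj_cancel:
  assumes U: "unitary U" and X: "X \<in> carrier_mat n n"
  shows "unitary_conj (U\<^sup>H) (unitary_conj U X) = X"
proof -
  from U have U': "U \<in> carrier_mat n n" and UU: "U\<^sup>H * U = 1\<^sub>m n" unfolding unitary_def by auto
  have "unitary_conj (U\<^sup>H) (unitary_conj U X) = (U\<^sup>H * U) * X * (U\<^sup>H * U)"
    unfolding unitary_conj_def using U' X by simp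
  then show ?thesis unfolding UU using X by simp
qed

lemma col_sp_unitary_conj:
  assumes U: "unitary U" and C: "C \<in> carrier_mat n n" and B: "B \<in> carrier_mat n n"
    and "col_sp C = col_sp B"
  shows "col_sp (unitary_conj U C) = col_sp (unitary_conj U B)"
proof -
  obtain W1 W2 where W: "W1 \<in> carrier_mat n n" "C = B * W1" "W2 \<in> carrier_mat n n" "B = C * W2"
    using assms(4) col_sp_eq_iff[OF C B] by auto
  show ?thesis
  proof (rule col_sp_eqI[of _ n n _ n "unitary_conj U W1" "unitary_conj U W2"])
    show "unitary_conj U C = unitary_conj U B * unitary_conj U W1"
      unfolding unitary_conj_mult[OF U B W(1)] W(2) ..
    show "unitary_conj U B = unitary_conj U C * unitary_conj U W2"
      unfolding unitary_conj_mult[OF U C W(3)] W(4)[symmetric] ..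
  qed (simp_all add: unitary_conj_carrier[OF U] B C W(1,3))
qed

lemma col_sp_unitary_conj_iff:
  assumes U: "unitary U" and C: "C \<in> carrier_mat n n" and B: "B \<in> carrier_mat n n"
  shows "col_sp (unitary_conj U C) = col_sp (unitary_conj U B) \<longleftrightarrow> col_sp C = col_sp B"
  using col_sp_unitary_conj[OF U C B]
    col_sp_unitary_conj[OF unitary_adjoint[OF U] unitary_conj_carrier[OF U C]
      unitary_conj_carrier[OF U B]]
  unfolding unitary_conj_cancel[OF U C] unitary_conj_cancel[OF U B] by blast

lemma mat_index_unitary_conj:
  assumes U: "unitary U" and B: "B \<in> carrier_mat n n"
  shows "mat_index (unitary_conj U B) = mat_index B"
  unfolding mat_index_def unitary_conj_pow[OF U B]
    col_sp_unitary_conj_iff[OF U pow_carrier_mat[OF B] pow_carrier_mat[OF B]] ..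

lemma MP_inv_unitary_conj:
  assumes U: "unitary U" and B: "B \<in> carrier_mat n n"
  shows "MP_inv (unitary_conj U B) = unitary_conj U (MP_inv B)"
proof (rule MP_inv_eqI)
  from is_MP_inv_MP_inv[OF B] have M: "MP_inv B \<in> carrier_mat n n"
    and MP: "B * MP_inv B * B = B" "MP_inv B * B * MP_inv B = MP_inv B"
      "(B * MP_inv B)\<^sup>H = B * MP_inv B" "(MP_inv B * B)\<^sup>H = MP_inv B * B"
    unfolding is_MP_inv_def by auto
  note hom = unitary_conj_mult[OF U] unitary_conj_adjoint[OF U] unitary_conj_carrier[OF U]
  show "unitary_conj U B \<in> carrier_mat n n" using B by (rule hom)
  show "is_MP_inv (unitary_conj U B) (unitary_conj U (MP_inv B))"
    unfolding is_MP_inv_def using B M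
    by (simp only: hom mult_carrier_square MP simp_thms)
qed

lemma core_EP_unitary_conj:
  assumes U: "unitary U" and B: "B \<in> carrier_mat n n"
  shows "core_EP (unitary_conj U B) = unitary_conj U (core_EP B)"
proof -
  from is_core_EP_core_EP[OF B] have X: "core_EP B \<in> carrier_mat n n"
    and XBX: "core_EP B * B * core_EP B = core_EP B"
    and col: "col_sp (core_EP B) = col_sp (B ^\<^sub>m mat_index B)"
    and adj: "col_sp ((core_EP B)\<^sup>H) = col_sp (B ^\<^sub>m mat_index B)"
    unfolding is_core_EP_def by auto
  note hom = unitary_conj_mult[OF U] unitary_conj_adjoint[OF U] unitary_conj_carrier[OF U]
    unitary_conj_pow[OF U]
  show ?thesis
  proof (rule core_EP_eqI[where j = "mat_index B"])
    show "unitary_conj U (core_EP B) * unitary_conj U B * unitary_conj U (core_EP B) =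
        unitary_conj U (core_EP B)"
      using B X by (simp only: hom mult_carrier_square XBX)
    show "col_sp (unitary_conj U (core_EP B)) = col_sp (unitary_conj U B ^\<^sub>m mat_index B)"
      unfolding hom(4)[OF B] col_sp_unitary_conj_iff[OF U X pow_carrier_mat[OF B]] by (rule col)
    show "col_sp ((unitary_conj U (core_EP B))\<^sup>H) = col_sp (unitary_conj U B ^\<^sub>m mat_index B)"
      unfolding hom(2)[OF X] hom(4)[OF B]
      using col_sp_unitary_conj_iff[OF U _ pow_carrier_mat[OF B]] X adj by simp
  qed (simp_all add: unitary_conj_carrier[OF U] B X mat_index_unitary_conj[OF U B])
qed

lemma WC_inv_unitary_conj:
  assumes U: "unitary U" and B: "B \<in> carrier_mat n n"
  shows "WC_inv (unitary_conj U B) = unitary_conj U (WC_inv B)"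
proof -
  have X: "core_EP B \<in> carrier_mat n n" and M: "MP_inv B \<in> carrier_mat n n"
    using core_EP_carrier[OF B] MP_inv_carrier[OF B] .
  note hom = unitary_conj_mult[OF U] unitary_conj_carrier[OF U] unitary_conj_pow[OF U]
  show ?thesis
    unfolding WC_inv_def WG_inv_def proj_mat_def
      core_EP_unitary_conj[OF U B] MP_inv_unitary_conj[OF U B]
    using B X M by (simp only: hom pow_carrier_mat mult_carrier_square)
qed

end

section \<open>Upper block matrices\<close>

definition upper_block_mat :: "nat \<Rightarrow> 'a :: zero mat \<Rightarrow> 'a mat \<Rightarrow> 'a mat" where
  "upper_block_mat p A B = four_block_mat A B (0\<^sub>m p (dim_row A)) (0\<^sub>m p p)"

definition corner_mat :: "nat \<Rightarrow> 'a :: zero mat \<Rightarrow> 'a mat" where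
  "corner_mat p Y = upper_block_mat p Y (0\<^sub>m (dim_row Y) p)"

lemma upper_block_mat_carrier[simp]:
  "A \<in> carrier_mat r r \<Longrightarrow> B \<in> carrier_mat r p \<Longrightarrow> upper_block_mat p A B \<in> carrier_mat (r + p) (r + p)"
  unfolding upper_block_mat_def by auto

lemma corner_mat_carrier[simp]: "Y \<in> carrier_mat r r \<Longrightarrow> corner_mat p Y \<in> carrier_mat (r + p) (r + p)"
  unfolding corner_mat_def by auto

lemma corner_mat_eq_four_block_mat:
  "Y \<in> carrier_mat r r \<Longrightarrow> corner_mat p Y = four_block_mat Y (0\<^sub>m r p) (0\<^sub>m p r) (0\<^sub>m p p)"
  unfolding corner_mat_def upper_block_mat_def by simp

lemma upper_block_mat_mult:
  assumes "A1 \<in> carrier_mat r r" "B1 \<in> carrier_mat r p"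
    "A2 \<in> carrier_mat r r" "B2 \<in> carrier_mat r p"
  shows "upper_block_mat p A1 B1 * upper_block_mat p A2 B2 =
    upper_block_mat p (A1 * A2) (A1 * (B2 :: 'a :: semiring_1 mat))"
proof -
  have "upper_block_mat p A1 B1 * upper_block_mat p A2 B2 =
      four_block_mat (A1 * A2 + B1 * 0\<^sub>m p r) (A1 * B2 + B1 * 0\<^sub>m p p)
        (0\<^sub>m p r * A2 + 0\<^sub>m p p * 0\<^sub>m p r) (0\<^sub>m p r * B2 + 0\<^sub>m p p * 0\<^sub>m p p)"
    unfolding upper_block_mat_def using assms
    by (subst mult_four_block_mat[of _ r r _ p _ p _ _ r _ p]) auto
  also have "\<dots> = upper_block_mat p (A1 * A2) (A1 * B2)"
    unfolding upper_block_mat_def using assms by auto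
  finally show ?thesis .
qed

lemma corner_mat_mult_upper_block_mat:
  "Y \<in> carrier_mat r r \<Longrightarrow> A \<in> carrier_mat r r \<Longrightarrow> B \<in> carrier_mat r p \<Longrightarrow>
    corner_mat p Y * upper_block_mat p A B =
      upper_block_mat p (Y * A) (Y * (B :: 'a :: semiring_1 mat))"
  unfolding corner_mat_def by (subst upper_block_mat_mult) auto

lemma upper_block_mat_mult_corner_mat:
  "Y \<in> carrier_mat r r \<Longrightarrow> A \<in> carrier_mat r r \<Longrightarrow> B \<in> carrier_mat r p \<Longrightarrow>
    upper_block_mat p A B * corner_mat p Y = corner_mat p (A * (Y :: 'a :: semiring_1 mat))"
  unfolding corner_mat_def by (subst upper_block_mat_mult) auto

lemma corner_mat_mult:
  "Y \<in> carrier_mat r r \<Longrightarrow> Z \<in> carrier_mat r r \<Longrightarrow>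
    corner_mat p Y * corner_mat p Z = corner_mat p (Y * (Z :: 'a :: semiring_1 mat))"
  using upper_block_mat_mult_corner_mat[of Z r Y "0\<^sub>m r p" p] unfolding corner_mat_def
  by auto

lemma mat_adjoint_corner_mat:
  "(A :: complex mat) \<in> carrier_mat r r \<Longrightarrow> (corner_mat p A)\<^sup>H = corner_mat p (A\<^sup>H)"
  unfolding corner_mat_def upper_block_mat_def
  by (subst mat_adjoint_four_block_mat[of _ r r _ p _ p]) auto

lemma upper_block_mat_mult_adjoint:
  assumes K: "(K :: complex mat) \<in> carrier_mat r r" and L: "L \<in> carrier_mat r p"
  shows "upper_block_mat p K L * (upper_block_mat p K L)\<^sup>H = corner_mat p (K * K\<^sup>H + L * L\<^sup>H)"
proof -
  have adj: "(upper_block_mat p K L)\<^sup>H = four_block_mat (K\<^sup>H) (0\<^sub>m r p) (L\<^sup>H) (0\<^sub>m p p)"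
    unfolding upper_block_mat_def using mat_adjoint_four_block_mat[OF K L, of "0\<^sub>m p r" p] K
    by auto
  have "upper_block_mat p K L * (upper_block_mat p K L)\<^sup>H =
      four_block_mat (K * K\<^sup>H + L * L\<^sup>H) (K * 0\<^sub>m r p + L * 0\<^sub>m p p)
        (0\<^sub>m p r * K\<^sup>H + 0\<^sub>m p p * L\<^sup>H) (0\<^sub>m p r * 0\<^sub>m r p + 0\<^sub>m p p * 0\<^sub>m p p)"
    unfolding adj unfolding upper_block_mat_def using K L
    by (subst mult_four_block_mat[of _ r r _ p _ p _ _ r _ p]) auto
  also have "\<dots> = corner_mat p (K * K\<^sup>H + L * L\<^sup>H)"
    unfolding corner_mat_def upper_block_mat_def using K L by auto
  finally show ?thesis .
qed

lemma col_sp_corner_mat: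
  assumes Y: "Y \<in> carrier_mat r r" and Z: "Z \<in> carrier_mat r r" and "col_sp Y = col_sp Z"
  shows "col_sp (corner_mat p Y) = col_sp (corner_mat p (Z :: 'a :: comm_ring_1 mat))"
proof -
  obtain W1 W2 where W: "W1 \<in> carrier_mat r r" "Y = Z * W1" "W2 \<in> carrier_mat r r" "Z = Y * W2"
    using col_sp_eq_iff[OF Y Z] assms(3) by auto
  show ?thesis
  proof (rule col_sp_eqI[of _ "r + p" "r + p" _ "r + p" "corner_mat p W1" "corner_mat p W2"])
    show "corner_mat p Y = corner_mat p Z * corner_mat p W1"
      unfolding corner_mat_mult[OF Z W(1)] W(2) ..
    show "corner_mat p Z = corner_mat p Y * corner_mat p W2"
      unfolding corner_mat_mult[OF Y W(3)] W(4)[symmetric] ..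
  qed (simp_all add: Y Z W(1,3))
qed

lemma pow_upper_block_mat:
  assumes T: "T \<in> carrier_mat r r" and G: "G \<in> carrier_mat r p"
  shows "upper_block_mat p T G ^\<^sub>m Suc j =
    corner_mat p (T ^\<^sub>m j) * upper_block_mat p T (G :: 'a :: semiring_1 mat)"
proof -
  let ?M = "upper_block_mat p T G"
  have M: "?M \<in> carrier_mat (r + p) (r + p)" using T G by simp
  show ?thesis
  proof (induct j)
    case 0
    show ?case
      using corner_mat_mult_upper_block_mat[OF one_carrier_mat T G] left_mult_one_mat[OF M] T G
      by (simp add: pow_mat.simps(2) carrier_matD[OF T])
  next
    case (Suc j)
    have Tj: "T ^\<^sub>m j \<in> carrier_mat r r" using T by simp
    have "?M ^\<^sub>m Suc (Suc j) = ?M * (corner_mat p (T ^\<^sub>m j) * ?M)"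
      unfolding pow_mat_Suc_left[OF M, of "Suc j"] Suc ..
    also have "\<dots> = (?M * corner_mat p (T ^\<^sub>m j)) * ?M"
      using M Tj by (simp add: assoc_mult_mat[of _ "r + p" "r + p" _ "r + p" _ "r + p"])
    also have "\<dots> = corner_mat p (T ^\<^sub>m Suc j) * ?M"
      unfolding upper_block_mat_mult_corner_mat[OF Tj T G] pow_mat_Suc_left[OF T] ..
    finally show ?case .
  qed
qed

context
  fixes T G Q :: "complex mat" and r p :: nat
  assumes T: "T \<in> carrier_mat r r" and G: "G \<in> carrier_mat r p"
    and Q: "Q \<in> carrier_mat (r + p) (r + p)"
    and right_inverse: "upper_block_mat p T G * Q = corner_mat p (1\<^sub>m r)"
begin

interpretation square_matrices "r + p" .
interpretation R: square_matrices r .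

lemma col_sp_pow_upper_block_mat:
  "col_sp (upper_block_mat p T G ^\<^sub>m Suc j) = col_sp (corner_mat p (T ^\<^sub>m j))"
proof -
  have M: "upper_block_mat p T G \<in> carrier_mat (r + p) (r + p)" using T G by simp
  have Tj: "T ^\<^sub>m j \<in> carrier_mat r r" using T by simp
  have "upper_block_mat p T G ^\<^sub>m Suc j * Q = corner_mat p (T ^\<^sub>m j) * (upper_block_mat p T G * Q)"
    unfolding pow_upper_block_mat[OF T G] using M Q Tj by simp
  also have "\<dots> = corner_mat p (T ^\<^sub>m j)"
    unfolding right_inverse corner_mat_mult[OF Tj one_carrier_mat] right_mult_one_mat[OF Tj] ..
  finally have "corner_mat p (T ^\<^sub>m j) = upper_block_mat p T G ^\<^sub>m Suc j * Q" ..
  then show ?thesis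
    using pow_upper_block_mat[OF T G] M Q Tj
    by (intro col_sp_eqI[of _ "r + p" "r + p" _ "r + p" "upper_block_mat p T G" Q]) simp_all
qed

lemma core_EP_upper_block_mat:
  "core_EP (upper_block_mat p T G) = corner_mat p (core_EP T)"
proof -
  have M: "upper_block_mat p T G \<in> carrier_mat (r + p) (r + p)" using T G by simp
  from R.is_core_EP_core_EP[OF T] have Y: "core_EP T \<in> carrier_mat r r"
    and YTY: "core_EP T * T * core_EP T = core_EP T"
    and col: "col_sp (core_EP T) = col_sp (T ^\<^sub>m mat_index T)"
    and adj: "col_sp ((core_EP T)\<^sup>H) = col_sp (T ^\<^sub>m mat_index T)"
    unfolding R.is_core_EP_def by auto
  define j where "j = max (mat_index (upper_block_mat p T G)) (mat_index T)"
  have "col_sp (T ^\<^sub>m mat_index T) = col_sp (T ^\<^sub>m j)"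
    using R.col_sp_pow_mat_ge_index[OF T, of j] unfolding j_def by simp
  then have col_j: "col_sp (corner_mat p Z) = col_sp (upper_block_mat p T G ^\<^sub>m Suc j)"
    if "Z \<in> carrier_mat r r" "col_sp Z = col_sp (T ^\<^sub>m mat_index T)" for Z
    unfolding col_sp_pow_upper_block_mat using that pow_carrier_mat[OF T]
    by (intro col_sp_corner_mat) simp_all
  show ?thesis
  proof (rule core_EP_eqI[OF M _ _ _ col_j[OF Y col]])
    have "corner_mat p (core_EP T) * upper_block_mat p T G * corner_mat p (core_EP T) =
        corner_mat p (core_EP T * T * core_EP T)"
      using M Y T G by (simp add: upper_block_mat_mult_corner_mat corner_mat_mult)
    then show "corner_mat p (core_EP T) * upper_block_mat p T G * corner_mat p (core_EP T) =
        corner_mat p (core_EP T)" unfolding YTY .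
    show "col_sp ((corner_mat p (core_EP T))\<^sup>H) = col_sp (upper_block_mat p T G ^\<^sub>m Suc j)"
      unfolding mat_adjoint_corner_mat[OF Y] using col_j Y adj by simp
  qed (use Y j_def in simp_all)
qed

lemma proj_mat_upper_block_mat: "proj_mat (upper_block_mat p T G) = corner_mat p (1\<^sub>m r)"
proof (rule proj_mat_eqI[OF _ _ Q])
  show "(corner_mat p (1\<^sub>m r :: complex mat))\<^sup>H = corner_mat p (1\<^sub>m r)"
    using mat_adjoint_corner_mat[of "1\<^sub>m r" r p] by simp
  show "corner_mat p (1\<^sub>m r) * upper_block_mat p T G = upper_block_mat p T G"
    using corner_mat_mult_upper_block_mat[OF one_carrier_mat T G] T G by simp
qed (use T G right_inverse in simp_all)

lemma WC_inv_upper_block_mat: "WC_inv (upper_block_mat p T G) = corner_mat p (WG_inv T)"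
proof -
  have Y: "core_EP T \<in> carrier_mat r r" by (rule R.core_EP_carrier[OF T])
  have "WC_inv (upper_block_mat p T G) =
      corner_mat p (core_EP T) * corner_mat p (core_EP T) *
        (upper_block_mat p T G * corner_mat p (1\<^sub>m r))"
    unfolding WC_inv_def WG_inv_def core_EP_upper_block_mat proj_mat_upper_block_mat
    using Y T G by (simp add: numeral_2_eq_2 pow_mat.simps(2))
  also have "\<dots> = corner_mat p (core_EP T * core_EP T * T)"
    unfolding upper_block_mat_mult_corner_mat[OF one_carrier_mat T G] right_mult_one_mat[OF T]
      corner_mat_mult[OF Y Y] corner_mat_mult[OF mult_carrier_mat[OF Y Y] T] ..
  also have "core_EP T * core_EP T * T = WG_inv T"
    unfolding WG_inv_def using Y by (simp add: numeral_2_eq_2 pow_mat.simps(2))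
  finally show ?thesis .
qed

end

lemma upper_block_mat_right_inverse:
  fixes S Sinv K L :: "complex mat"
  assumes S: "S \<in> carrier_mat r r" "Sinv \<in> carrier_mat r r" "S * Sinv = 1\<^sub>m r"
    and K: "K \<in> carrier_mat r r" and L: "L \<in> carrier_mat r p" and KL: "K * K\<^sup>H + L * L\<^sup>H = 1\<^sub>m r"
  shows "\<exists>Q \<in> carrier_mat (r + p) (r + p).
    upper_block_mat p (S * K) (S * L) * Q = corner_mat p (1\<^sub>m r)"
proof -
  interpret square_matrices "r + p" .
  let ?G = "upper_block_mat p K L"
  have G: "?G \<in> carrier_mat (r + p) (r + p)" using K L by simp
  have "upper_block_mat p (S * K) (S * L) * (?G\<^sup>H * corner_mat p Sinv) =
      corner_mat p S * (?G * ?G\<^sup>H) * corner_mat p Sinv"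
    unfolding corner_mat_mult_upper_block_mat[OF S(1) K L, symmetric] using G S by simp
  also have "\<dots> = corner_mat p (S * 1\<^sub>m r * Sinv)"
    unfolding upper_block_mat_mult_adjoint[OF K L] KL using S by (simp add: corner_mat_mult)
  finally show ?thesis using G S by (intro bexI[of _ "?G\<^sup>H * corner_mat p Sinv"]) simp_all
qed

lemma diagonal_mat_right_inverse:
  assumes S: "S \<in> carrier_mat r r" "diagonal_mat S" and nz: "\<forall>i<r. S $$ (i, i) \<noteq> (0 :: 'a :: field)"
  shows "\<exists>Sinv \<in> carrier_mat r r. S * Sinv = 1\<^sub>m r"
proof -
  have "upper_triangular S" using S unfolding diagonal_mat_def by (intro upper_triangularI) auto
  then have "det S = prod_list (diag_mat S)" by (rule det_upper_triangular[OF _ S(1)])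
  also have "\<dots> \<noteq> 0" using nz S(1) by (auto simp: diag_mat_def)
  finally show ?thesis by (rule det_nonzero_right_inverse[OF S(1)])
qed

theorem corollary6p2:
  fixes A U S K L :: "complex mat" and n r k :: nat
  assumes A: "A \<in> carrier_mat n n"
    and rk: "vec_space.rank n A = r" and r0: "r > 0"
    and k: "k = mat_index A"
    and U: "U \<in> carrier_mat n n" "U * mat_adjoint U = 1\<^sub>m n" "mat_adjoint U * U = 1\<^sub>m n"
    and S: "S \<in> carrier_mat r r" "diagonal_mat S"
      "\<forall>i<r. S $$ (i, i) \<in> \<real> \<and> Re (S $$ (i, i)) > 0"
      "\<forall>i j. i \<le> j \<and> j < r \<longrightarrow> Re (S $$ (j, j)) \<le> Re (S $$ (i, i))"
    and KL: "K \<in> carrier_mat r r" "L \<in> carrier_mat r (n - r)"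
      "K * mat_adjoint K + L * mat_adjoint L = 1\<^sub>m r"
    and HS: "A = U * four_block_mat (S * K) (S * L) (0\<^sub>m (n - r) r) (0\<^sub>m (n - r) (n - r))
                 * mat_adjoint U"
  shows "(m_weak_core_inv 1 A = WC_inv A \<and>
         WC_inv A = U * four_block_mat (WG_inv (S * K)) (0\<^sub>m r (n - r))
                          (0\<^sub>m (n - r) r) (0\<^sub>m (n - r) (n - r)) * mat_adjoint U) \<and>
         (\<forall>m::nat. m \<ge> 1 \<and> m \<ge> k \<longrightarrow>
         m_weak_core_inv m A = core_EP A \<and>
         core_EP A = U * four_block_mat (core_EP (S * K)) (0\<^sub>m r (n - r))
                          (0\<^sub>m (n - r) r) (0\<^sub>m (n - r) (n - r)) * mat_adjoint U)"
proof -
  interpret square_matrices n .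
  interpret R: square_matrices r .
  define p where "p = n - r"
  have n: "n = r + p" using vec_space.rank_le_nc[OF A] rk unfolding p_def by simp
  have SK: "S * K \<in> carrier_mat r r" "S * L \<in> carrier_mat r p" using S(1) KL unfolding p_def by auto
  obtain Sinv where "Sinv \<in> carrier_mat r r" "S * Sinv = 1\<^sub>m r"
    using diagonal_mat_right_inverse[OF S(1,2)] S(3) by fastforce
  then obtain Q where Q: "Q \<in> carrier_mat (r + p) (r + p)"
    "upper_block_mat p (S * K) (S * L) * Q = corner_mat p (1\<^sub>m r)"
    using upper_block_mat_right_inverse[OF S(1) _ _ KL(1) KL(2)[folded p_def] KL(3)] by blast
  have B: "upper_block_mat p (S * K) (S * L) \<in> carrier_mat n n" unfolding n using SK by simp
  have "unitary U" unfolding unitary_def using U by simp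
  moreover have "A = unitary_conj U (upper_block_mat p (S * K) (S * L))"
    unfolding HS unitary_conj_def upper_block_mat_def p_def by (simp add: carrier_matD(1)[OF S(1)])
  ultimately have "core_EP A = U * corner_mat p (core_EP (S * K)) * U\<^sup>H"
    "WC_inv A = U * corner_mat p (WG_inv (S * K)) * U\<^sup>H"
    using core_EP_unitary_conj[OF _ B] WC_inv_unitary_conj[OF _ B]
      core_EP_upper_block_mat[OF SK Q] WC_inv_upper_block_mat[OF SK Q]
    unfolding unitary_conj_def by simp_all
  then show ?thesis
    unfolding p_def[symmetric]
    using corner_mat_eq_four_block_mat[OF R.core_EP_carrier[OF SK(1)]]
      corner_mat_eq_four_block_mat[OF R.WG_inv_carrier[OF SK(1)]]
      m_weak_core_inv_one m_weak_core_inv_eq_core_EP[OF A] k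
    by simp
qed

end
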